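(* Let $H$ be a real Hilbert space with inner product $(\cdot,\cdot)_H$ and norm $\|\cdot\|$. Let $\mathcal{L}$ be a symmetric positive definite linear operator on $H$ and $f:H\to\mathbb{R}$ Fréchet differentiable with $\nabla f$ Lipschitz continuous with constant $L$. For each $\Phi\in H$ let $\mathbf{L}(\Phi)=\mathbf{M}(\Phi)+\mathbf{S}(\Phi)$ with $\mathbf{S}(\Phi)$ skew-symmetric and $-\mathbf{M}(\Phi)$ symmetric positive definite, and assume there are constants $\alpha_{\mathbf{M}},\beta_{\mathbf{S}}>0$ such that for all $\Phi,\Psi_1,\Psi_2,\Psi\in H$: $(\mathbf{S}(\Phi)\Psi_1,\Psi_2)_H\le\beta_{\mathbf{S}}\|\Psi_1\|\|\Psi_2\|$ and $(-\mathbf{M}(\Phi)\Psi,\Psi)_H\ge\alpha_{\mathbf{M}}\|\Psi\|^2$. Let $\tau>0$, $A>0$, let $\Phi^{n-1},\Phi^n,\hat\Phi^{n+1}\in H$ be given, and suppose $\Phi^{n+1}$ satisfies the SGE-SBDF2 scheme $$\frac{3\Phi^{n+1}-4\Phi^n+\Phi^{n-1}}{2\tau}=\mathbf{L}(\hat\Phi^{n+1})\mu^{n+1},\quad \mu^{n+1}=\mathcal{L}\Phi^{n+1}-\tau A\,\mathbf{M}(\hat\Phi^{n+1})(3\Phi^{n+1}-4\Phi^n+\Phi^{n-1})+2\nabla f(\Phi^n)-\nabla f(\Phi^{n-1}).$$ Let $c=\big(1+\frac{\beta_{\mathbf{S}}}{\alpha_{\mathbf{M}}}\big)^{-1}$ and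 define $$\tilde E_{BDF2}(\Phi^{k+1},\Phi^k)=\tfrac14\|\mathcal{L}^{1/2}\Phi^{k+1}\|^2+\tfrac14\|\mathcal{L}^{1/2}(2\Phi^{k+1}-\Phi^k)\|^2+\tfrac32f(\Phi^{k+1})-\tfrac12f(\Phi^k)+\big(\tfrac{3L}{2}+\sqrt{2A}\,c\big)\|\Phi^{k+1}-\Phi^k\|^2.$$ Then, provided $A\ge\frac{9L^2}{8}\big(1+\frac{\beta_{\mathbf{S}}}{\alpha_{\mathbf{M}}}\big)^2$ (so that all coefficients on the right below are nonpositive), $$\tilde E_{BDF2}(\Phi^{n+1},\Phi^n)-\tilde E_{BDF2}(\Phi^n,\Phi^{n-1})\le-\big(2\sqrt{2A}\,c-3L\big)\|\Phi^{n+1}-\Phi^n\|^2-\tfrac32\sqrt{2A}\,c\,\|d_{tt}\Phi^n\|^2-\tfrac14\|\mathcal{L}^{1/2}d_{tt}\Phi^n\|^2,$$ where $d_{tt}\Phi^n=\Phi^{n+1}-2\Phi^n+\Phi^{n-1}$.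
   Context: $\|\mathcal{L}^{1/2}\Phi\|^2=(\Phi,\mathcal{L}\Phi)_H$. Skew-symmetric: $(\mathbf{S}\Phi,\Psi)_H=-(\Phi,\mathbf{S}\Psi)_H$. *)

theory Defs
  imports "HOL-Analysis.Analysis"
begin

text \<open>Squared norm of the square root of a symmetric positive definite operator,
  via the identity  norm (Lop^(1/2) x)^2 = inner x (Lop x).\<close>
definition sqrt_op_norm_sq :: "('a::real_inner \<Rightarrow> 'a) \<Rightarrow> 'a \<Rightarrow> real" where
  "sqrt_op_norm_sq Lop x = inner x (Lop x)"

definition sym_pos_def_op :: "('a::real_inner \<Rightarrow> 'a) \<Rightarrow> bool" where
  "sym_pos_def_op T \<longleftrightarrow> linear T \<and> (\<forall>x y. inner (T x) y = inner x (T y))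
      \<and> (\<forall>x. x \<noteq> 0 \<longrightarrow> inner (T x) x > 0)"

definition skew_sym_op :: "('a::real_inner \<Rightarrow> 'a) \<Rightarrow> bool" where
  "skew_sym_op T \<longleftrightarrow> linear T \<and> (\<forall>x y. inner (T x) y = - inner x (T y))"

definition E_BDF2 :: "('a::real_inner \<Rightarrow> 'a) \<Rightarrow> ('a \<Rightarrow> real) \<Rightarrow> real \<Rightarrow> real \<Rightarrow> real
    \<Rightarrow> 'a \<Rightarrow> 'a \<Rightarrow> real" where
  "E_BDF2 Lop f Lc A c P1 P0 =
     1/4 * sqrt_op_norm_sq Lop P1 + 1/4 * sqrt_op_norm_sq Lop (2 *\<^sub>R P1 - P0)
     + 3/2 * f P1 - 1/2 * f P0
     + (3 * Lc / 2 + sqrt (2 * A) * c) * (norm (P1 - P0))\<^sup>2"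

end

theory Submission
  imports Defs
begin

text \<open>Write D = 3\<Phi>(n+1) - 4\<Phi>(n) + \<Phi>(n-1) and P = -M(Phat). Pairing the definition of \<mu>
  with D and using the scheme together with the skew-symmetry of S gives
  (D, \<L>\<Phi>(n+1) + 2\<nabla>f(\<Phi>(n)) - \<nabla>f(\<Phi>(n-1))) = -2\<tau>(P\<mu>, \<mu>) - \<tau>A(PD, D).
  The \<L>-part of the energy difference is half the pairing of D with \<L>\<Phi>(n+1) minus
  (\<L> d_tt, d_tt)/4, and the descent lemma for f absorbs the gradient pairing at the
  cost of 3L/2 times both squared increments. The dissipation 2\<tau>(P\<mu>, \<mu>) + \<tau>A(PD, D)
  controls norm(D)^2: by the scheme norm(D)^2 = 2\<tau>(M\<mu> + S\<mu>, D), and Young's inequality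
  bounds the M-term through the quadratic form of P and the S-term through \<beta> and the
  coercivity of P; the Young weight 2/sqrt(2A) matches the two dissipation terms and gives
  sqrt(2A) c norm(D)^2 \<le> 2\<tau>(P\<mu>, \<mu>) + \<tau>A(PD, D). Finally
  norm(D)^2 = 3 norm(d_tt)^2 + 6 norm(\<Phi>(n+1) - \<Phi>(n))^2 - 2 norm(\<Phi>(n) - \<Phi>(n-1))^2
  turns this into the claimed negative terms, the old increment cancelling exactly against
  the increment term of the energy.\<close>

lemma bdf2_increment_eq:
  fixes a b m :: "'a::real_vector"
  shows "3 *\<^sub>R a - 4 *\<^sub>R b + m = 3 *\<^sub>R (a - b) - (b - m)"
proof -
  have "4 *\<^sub>R b = 3 *\<^sub>R b + b"
    using scaleR_left_distrib[of 3 1 b] by simp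
  then show ?thesis
    by (simp add: algebra_simps)
qed

lemma norm_bdf2_increment_sq:
  fixes a b m :: "'a::real_inner"
  shows "(norm (3 *\<^sub>R a - 4 *\<^sub>R b + m))\<^sup>2
    = 3 * (norm (a - 2 *\<^sub>R b + m))\<^sup>2 + 6 * (norm (a - b))\<^sup>2 - 2 * (norm (b - m))\<^sup>2"
proof -
  define u v where "u = a - b" and "v = b - m"
  have dtt: "a - 2 *\<^sub>R b + m = u - v"
    by (simp add: u_def v_def scaleR_2 algebra_simps)
  show ?thesis
    unfolding bdf2_increment_eq dtt u_def[symmetric] v_def[symmetric]
    by (simp add: power2_norm_eq_inner inner_diff_left inner_diff_right inner_commute algebra_simps)
qed

lemma bdf2_sqrt_op_norm_sq_identity:
  fixes T :: "'a::real_inner \<Rightarrow> 'a"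
  assumes lin: "linear T" and sym: "\<And>x y. inner (T x) y = inner x (T y)"
  shows "1/4 * sqrt_op_norm_sq T a + 1/4 * sqrt_op_norm_sq T (2 *\<^sub>R a - b)
      - (1/4 * sqrt_op_norm_sq T b + 1/4 * sqrt_op_norm_sq T (2 *\<^sub>R b - m))
      = 1/2 * inner (3 *\<^sub>R a - 4 *\<^sub>R b + m) (T a) - 1/4 * sqrt_op_norm_sq T (a - 2 *\<^sub>R b + m)"
proof -
  have "inner y (T x) = inner x (T y)" for x y
    using sym[of y x] by (simp add: inner_commute)
  then show ?thesis
    unfolding sqrt_op_norm_sq_def
    by (simp add: linear_diff[OF lin] linear_add[OF lin] linear_scale[OF lin]
        inner_diff_left inner_diff_right inner_add_left inner_add_right algebra_simps)
qed

lemma sym_psd_Young: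
  fixes T :: "'a::real_inner \<Rightarrow> 'a"
  assumes lin: "linear T" and sym: "\<And>x y. inner (T x) y = inner x (T y)"
    and psd: "\<And>x. 0 \<le> inner (T x) x" and \<epsilon>: "\<epsilon> > 0"
  shows "2 * inner (T u) v \<le> \<epsilon> * inner (T u) u + inner (T v) v / \<epsilon>"
proof -
  have "0 \<le> inner (T (\<epsilon> *\<^sub>R u - v)) (\<epsilon> *\<^sub>R u - v)"
    by (rule psd)
  also have "\<dots> = \<epsilon> * (\<epsilon> * inner (T u) u - 2 * inner (T u) v) + inner (T v) v"
    using sym[of v u]
    by (simp add: linear_diff[OF lin] linear_scale[OF lin] inner_diff_left inner_diff_right
        inner_commute algebra_simps)
  finally have "\<epsilon> * (2 * inner (T u) v) \<le> \<epsilon> * (\<epsilon> * inner (T u) u + inner (T v) v / \<epsilon>)"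
    using \<epsilon> by (simp add: algebra_simps)
  then show ?thesis
    using \<epsilon> by simp
qed

lemma lipschitz_gradient_descent:
  fixes f :: "'a::real_inner \<Rightarrow> real" and g :: "'a \<Rightarrow> 'a"
  assumes fderiv: "\<And>x. (f has_derivative (\<lambda>h. inner (g x) h)) (at x)"
    and lip: "L-lipschitz_on UNIV g"
  shows "f y - f x \<le> inner (g x) (y - x) + L/2 * (norm (y - x))\<^sup>2"
proof -
  define h where "h = y - x"
  define \<phi> where "\<phi> t = f (x + t *\<^sub>R h) - t * inner (g x) h - L/2 * t^2 * (norm h)\<^sup>2" for t
  have \<phi>_deriv: "(\<phi> has_real_derivative
      (inner (g (x + t *\<^sub>R h)) h - inner (g x) h - L * t * (norm h)\<^sup>2)) (at t)" for t
  proof -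
    have "((\<lambda>t. f (x + t *\<^sub>R h)) has_derivative (\<lambda>u. inner (g (x + t *\<^sub>R h)) (u *\<^sub>R h))) (at t)"
      by (rule has_derivative_compose[OF _ fderiv]) (auto intro!: derivative_eq_intros)
    then have "((\<lambda>t. f (x + t *\<^sub>R h)) has_real_derivative inner (g (x + t *\<^sub>R h)) h) (at t)"
      by (rule has_derivative_imp_has_field_derivative) (simp add: algebra_simps)
    then show ?thesis
      unfolding \<phi>_def by (auto intro!: derivative_eq_intros)
  qed
  have \<phi>_deriv_nonpos: "inner (g (x + t *\<^sub>R h)) h - inner (g x) h - L * t * (norm h)\<^sup>2 \<le> 0"
    if "0 \<le> t" for t
  proof -
    have "inner (g (x + t *\<^sub>R h)) h - inner (g x) h = inner (g (x + t *\<^sub>R h) - g x) h"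
      by (simp add: inner_diff_left)
    also have "\<dots> \<le> norm (g (x + t *\<^sub>R h) - g x) * norm h"
      by (rule norm_cauchy_schwarz)
    also have "\<dots> \<le> L * norm (t *\<^sub>R h) * norm h"
      using lipschitz_on_normD[OF lip, of "x + t *\<^sub>R h" x] by (simp add: mult_right_mono)
    also have "\<dots> = L * t * (norm h)\<^sup>2"
      using that by (simp add: power2_eq_square)
    finally show ?thesis by simp
  qed
  have "\<phi> 1 \<le> \<phi> 0"
  proof (rule DERIV_nonpos_imp_nonincreasing[of 0 1 \<phi>])
    fix t :: real
    assume "0 \<le> t" "t \<le> 1"
    then show "\<exists>y. (\<phi> has_real_derivative y) (at t) \<and> y \<le> 0"
      using \<phi>_deriv \<phi>_deriv_nonpos by blast
  qed simp
  then show ?thesis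
    unfolding \<phi>_def h_def by (simp add: algebra_simps)
qed

lemma bdf2_gradient_extrapolation_bound:
  fixes f :: "'a::real_inner \<Rightarrow> real" and g :: "'a \<Rightarrow> 'a"
  assumes fderiv: "\<And>x. (f has_derivative (\<lambda>h. inner (g x) h)) (at x)"
    and lip: "L-lipschitz_on UNIV g"
  shows "3/2 * f P1 - 2 * f P0 + 1/2 * f Pm
      - 1/2 * inner (3 *\<^sub>R P1 - 4 *\<^sub>R P0 + Pm) (2 *\<^sub>R g P0 - g Pm)
    \<le> 3 * L / 2 * ((norm (P1 - P0))\<^sup>2 + (norm (P0 - Pm))\<^sup>2)"
proof -
  define u v where "u = P1 - P0" and "v = P0 - Pm"
  have D: "3 *\<^sub>R P1 - 4 *\<^sub>R P0 + Pm = 3 *\<^sub>R u - v"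
    unfolding u_def v_def by (rule bdf2_increment_eq)
  have L: "L \<ge> 0"
    using lip by (rule lipschitz_on_nonneg)
  define C where "C = inner (3 *\<^sub>R u - v) (g P0 - g Pm)"
  have descent_P1: "f P1 - f P0 \<le> inner (g P0) u + 1/2 * (L * (norm u)\<^sup>2)"
    using lipschitz_gradient_descent[OF fderiv lip, of P1 P0] by (simp add: u_def)
  have descent_Pm: "f Pm - f P0 \<le> - inner (g P0) v + 1/2 * (L * (norm v)\<^sup>2)"
    using lipschitz_gradient_descent[OF fderiv lip, of Pm P0]
    by (simp add: v_def norm_minus_commute inner_diff_right)
  have "- C \<le> norm (3 *\<^sub>R u - v) * norm (g P0 - g Pm)"
    using norm_cauchy_schwarz[of "3 *\<^sub>R u - v" "g Pm - g P0"]
    by (simp add: C_def inner_diff_right norm_minus_commute)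
  also have "\<dots> \<le> (3 * norm u + norm v) * (L * norm v)"
    using norm_triangle_ineq4[of "3 *\<^sub>R u" v] lipschitz_on_normD[OF lip, of P0 Pm]
    by (intro mult_mono) (simp_all add: v_def)
  also have "\<dots> = 3 * L * (norm u * norm v) + L * (norm v)\<^sup>2"
    by (simp add: algebra_simps power2_eq_square)
  also have "\<dots> \<le> 3 * L * (((norm u)\<^sup>2 + (norm v)\<^sup>2) / 2) + L * (norm v)\<^sup>2"
    using sum_squares_bound[of "norm u" "norm v"] L by (intro add_right_mono mult_left_mono) auto
  also have "\<dots> = 3/2 * (L * (norm u)\<^sup>2) + 5/2 * (L * (norm v)\<^sup>2)"
    by (simp add: field_simps)
  finally have cross: "- C \<le> 3/2 * (L * (norm u)\<^sup>2) + 5/2 * (L * (norm v)\<^sup>2)" .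
  have "inner (3 *\<^sub>R u - v) (2 *\<^sub>R g P0 - g Pm) = 3 * inner (g P0) u - inner (g P0) v + C"
    by (simp add: C_def inner_diff_left inner_diff_right inner_commute algebra_simps)
  moreover have "3 * L / 2 * ((norm u)\<^sup>2 + (norm v)\<^sup>2) = 3/2 * (L * (norm u)\<^sup>2) + 3/2 * (L * (norm v)\<^sup>2)"
    by (simp add: algebra_simps)
  ultimately show ?thesis
    unfolding D u_def[symmetric] v_def[symmetric] using descent_P1 descent_Pm cross by linarith
qed

lemma sbdf2_pairing_identity:
  fixes M S :: "'a::real_inner \<Rightarrow> 'a"
  assumes S_skew: "skew_sym_op S"
    and D: "D = (2 * \<tau>) *\<^sub>R (M \<mu> + S \<mu>)"
    and mu: "\<mu> = v - (\<tau> * A) *\<^sub>R M D + w"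
  shows "inner D v + inner D w = - 2 * \<tau> * inner (- M \<mu>) \<mu> - \<tau> * A * inner (- M D) D"
proof -
  have "inner (S \<mu>) \<mu> = - inner \<mu> (S \<mu>)"
    using S_skew by (simp add: skew_sym_op_def)
  then have "inner (S \<mu>) \<mu> = 0"
    by (simp add: inner_commute)
  then have "inner D \<mu> = - 2 * \<tau> * inner (- M \<mu>) \<mu>"
    by (simp add: D inner_add_left)
  moreover have "inner D \<mu> = inner D v + inner D w + \<tau> * A * inner (- M D) D"
    by (subst mu) (simp add: inner_add_right inner_diff_right inner_commute)
  ultimately show ?thesis
    by linarith
qed

lemma norm_sq_le_weighted_dissipation:
  fixes M S :: "'a::real_inner \<Rightarrow> 'a"
  assumes M_lin: "linear M" and M_sym: "\<And>x y. inner (M x) y = inner x (M y)"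
    and M_coer: "\<And>x. alpha * (norm x)\<^sup>2 \<le> inner (- M x) x" and alpha: "alpha > 0"
    and S_bound: "\<And>x y. inner (S x) y \<le> beta * norm x * norm y" and beta: "beta \<ge> 0"
    and \<tau>: "\<tau> \<ge> 0" and \<epsilon>: "\<epsilon> > 0"
    and D: "D = (2 * \<tau>) *\<^sub>R (M \<mu> + S \<mu>)"
  shows "(norm D)\<^sup>2 \<le> \<tau> * (1 + beta / alpha) * (\<epsilon> * inner (- M \<mu>) \<mu> + inner (- M D) D / \<epsilon>)"
proof -
  define W where "W = \<epsilon> * inner (- M \<mu>) \<mu> + inner (- M D) D / \<epsilon>"
  have P_Young: "2 * inner (- M u) v \<le> \<epsilon> * inner (- M u) u + inner (- M v) v / \<epsilon>" for u v
  proof (rule sym_psd_Young[OF linear_compose_neg[OF M_lin] _ _ \<epsilon>])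
    show "inner (- M x) y = inner x (- M y)" for x y
      using M_sym by simp
    show "0 \<le> inner (- M x) x" for x
      using M_coer[of x] alpha by (meson order_trans mult_nonneg_nonneg less_imp_le zero_le_power2)
  qed
  have M_part: "2 * inner (M \<mu>) D \<le> W"
    using P_Young[of \<mu> "- D"] linear_neg[OF M_lin] by (simp add: W_def)
  have Young: "2 * (norm \<mu> * norm D) \<le> \<epsilon> * (norm \<mu>)\<^sup>2 + (norm D)\<^sup>2 / \<epsilon>"
    using sym_psd_Young[OF linear_ident, of \<epsilon> "norm \<mu>" "norm D"] \<epsilon>
    by (simp add: power2_eq_square)
  have "alpha * (\<epsilon> * (norm \<mu>)\<^sup>2 + (norm D)\<^sup>2 / \<epsilon>)
      = \<epsilon> * (alpha * (norm \<mu>)\<^sup>2) + alpha * (norm D)\<^sup>2 / \<epsilon>"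
    by (simp add: algebra_simps)
  also have "\<dots> \<le> W"
    unfolding W_def using M_coer \<epsilon> by (intro add_mono mult_left_mono divide_right_mono) auto
  finally have "\<epsilon> * (norm \<mu>)\<^sup>2 + (norm D)\<^sup>2 / \<epsilon> \<le> W / alpha"
    using alpha by (simp add: pos_le_divide_eq mult.commute)
  with Young have "2 * (norm \<mu> * norm D) \<le> W / alpha"
    by (rule order_trans)
  then have "beta * (2 * (norm \<mu> * norm D)) \<le> beta / alpha * W"
    using beta by (metis mult_left_mono times_divide_eq_left times_divide_eq_right)
  then have S_part: "2 * inner (S \<mu>) D \<le> beta / alpha * W"
    using S_bound[of \<mu> D] by (simp add: algebra_simps)
  have "(norm D)\<^sup>2 = inner ((2 * \<tau>) *\<^sub>R (M \<mu> + S \<mu>)) D"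
    by (simp only: D[symmetric] power2_norm_eq_inner)
  also have "\<dots> = \<tau> * (2 * inner (M \<mu>) D + 2 * inner (S \<mu>) D)"
    by (simp add: inner_add_left algebra_simps)
  also have "\<dots> \<le> \<tau> * (W + beta / alpha * W)"
    using M_part S_part \<tau> by (intro mult_left_mono add_mono)
  finally show ?thesis
    by (simp add: W_def algebra_simps)
qed

lemma sbdf2_dissipation_bound:
  fixes M S :: "'a::real_inner \<Rightarrow> 'a"
  assumes M_lin: "linear M" and M_sym: "\<And>x y. inner (M x) y = inner x (M y)"
    and M_coer: "\<And>x. alpha * (norm x)\<^sup>2 \<le> inner (- M x) x" and alpha: "alpha > 0"
    and S_bound: "\<And>x y. inner (S x) y \<le> beta * norm x * norm y" and beta: "beta \<ge> 0"
    and \<tau>: "\<tau> \<ge> 0" and A: "A > 0"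
    and D: "D = (2 * \<tau>) *\<^sub>R (M \<mu> + S \<mu>)"
  shows "sqrt (2 * A) * inverse (1 + beta / alpha) * (norm D)\<^sup>2
    \<le> 2 * \<tau> * inner (- M \<mu>) \<mu> + \<tau> * A * inner (- M D) D"
proof -
  define r c \<epsilon> where "r = sqrt (2 * A)" and "c = inverse (1 + beta / alpha)" and "\<epsilon> = 2 / r"
  define X Y where "X = inner (- M \<mu>) \<mu>" and "Y = inner (- M D) D"
  have r: "r > 0" "r * r = 2 * A"
    using A by (auto simp: r_def)
  have "1 + beta / alpha > 0"
    using alpha beta by (simp add: add_pos_nonneg)
  then have c: "c > 0" "c * (1 + beta / alpha) = 1"
    by (simp_all add: c_def)
  have \<epsilon>: "\<epsilon> > 0" "r * \<epsilon> = 2" "r * (Y / \<epsilon>) = r * r / 2 * Y"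
    using r by (simp_all add: \<epsilon>_def)
  have "(norm D)\<^sup>2 \<le> \<tau> * (1 + beta / alpha) * (\<epsilon> * X + Y / \<epsilon>)"
    unfolding X_def Y_def
    by (rule norm_sq_le_weighted_dissipation[OF M_lin M_sym M_coer alpha S_bound beta \<tau> \<epsilon>(1) D])
  then have "r * c * (norm D)\<^sup>2 \<le> r * c * (\<tau> * (1 + beta / alpha) * (\<epsilon> * X + Y / \<epsilon>))"
    using r c by (intro mult_left_mono) simp_all
  also have "\<dots> = (c * (1 + beta / alpha)) * \<tau> * ((r * \<epsilon>) * X + r * (Y / \<epsilon>))"
    by (simp add: algebra_simps)
  also have "\<dots> = 2 * \<tau> * X + \<tau> * A * Y"
    unfolding c(2) \<epsilon>(2,3) r(2) by (simp add: algebra_simps)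
  finally show ?thesis
    by (simp add: r_def c_def X_def Y_def)
qed

theorem theorem3p9:
  fixes Lop :: "'a::{real_inner, complete_space} \<Rightarrow> 'a"
    and f :: "'a \<Rightarrow> real" and gradf :: "'a \<Rightarrow> 'a"
    and M S :: "'a \<Rightarrow> 'a \<Rightarrow> 'a"
    and Lc alphaM betaS \<tau> A :: real
    and Pm P0 Phat P1 :: 'a
  assumes Lop: "sym_pos_def_op Lop"
    and fderiv: "\<And>x. (f has_derivative (\<lambda>h. inner (gradf x) h)) (at x)"
    and lip: "Lc-lipschitz_on UNIV gradf"
    and S_skew: "\<And>\<Phi>. skew_sym_op (S \<Phi>)"
    and M_spd: "\<And>\<Phi>. sym_pos_def_op (\<lambda>x. - M \<Phi> x)"
    and alpha_pos: "alphaM > 0" and beta_pos: "betaS > 0"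
    and S_bound: "\<And>\<Phi> \<Psi>1 \<Psi>2. inner (S \<Phi> \<Psi>1) \<Psi>2 \<le> betaS * norm \<Psi>1 * norm \<Psi>2"
    and M_coer: "\<And>\<Phi> \<Psi>. inner (- M \<Phi> \<Psi>) \<Psi> \<ge> alphaM * (norm \<Psi>)\<^sup>2"
    and tau_pos: "\<tau> > 0" and A_pos: "A > 0"
    and scheme: "(1 / (2 * \<tau>)) *\<^sub>R (3 *\<^sub>R P1 - 4 *\<^sub>R P0 + Pm)
        = M Phat \<mu> + S Phat \<mu>"
    and mu: "\<mu> = Lop P1 - (\<tau> * A) *\<^sub>R M Phat (3 *\<^sub>R P1 - 4 *\<^sub>R P0 + Pm)
        + 2 *\<^sub>R gradf P0 - gradf Pm"
    and A_large: "A \<ge> 9 * Lc\<^sup>2 / 8 * (1 + betaS / alphaM)\<^sup>2"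
  shows "let c = inverse (1 + betaS / alphaM); dtt = P1 - 2 *\<^sub>R P0 + Pm in
    E_BDF2 Lop f Lc A c P1 P0 - E_BDF2 Lop f Lc A c P0 Pm
      \<le> - (2 * sqrt (2 * A) * c - 3 * Lc) * (norm (P1 - P0))\<^sup>2
         - 3/2 * sqrt (2 * A) * c * (norm dtt)\<^sup>2
         - 1/4 * sqrt_op_norm_sq Lop dtt"
proof -
  define c where "c = inverse (1 + betaS / alphaM)"
  define D dtt where "D = 3 *\<^sub>R P1 - 4 *\<^sub>R P0 + Pm" and "dtt = P1 - 2 *\<^sub>R P0 + Pm"
  have Lop_lin: "linear Lop" and Lop_sym: "\<And>x y. inner (Lop x) y = inner x (Lop y)"
    using Lop by (auto simp: sym_pos_def_op_def)
  have M_lin: "linear (M Phat)" and M_sym: "\<And>x y. inner (M Phat x) y = inner x (M Phat y)"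
    using M_spd[of Phat] linear_compose_neg[of "\<lambda>x. - M Phat x"] by (auto simp: sym_pos_def_op_def)
  have "D = (2 * \<tau>) *\<^sub>R ((1 / (2 * \<tau>)) *\<^sub>R D)"
    using tau_pos by simp
  then have D_scheme: "D = (2 * \<tau>) *\<^sub>R (M Phat \<mu> + S Phat \<mu>)"
    unfolding D_def scheme .
  have pairing: "inner D (Lop P1) + inner D (2 *\<^sub>R gradf P0 - gradf Pm)
      = - 2 * \<tau> * inner (- M Phat \<mu>) \<mu> - \<tau> * A * inner (- M Phat D) D"
    by (rule sbdf2_pairing_identity[where M = "M Phat", OF S_skew D_scheme]) (simp add: mu D_def)
  have "sqrt (2 * A) * c * (norm D)\<^sup>2 \<le> 2 * \<tau> * inner (- M Phat \<mu>) \<mu> + \<tau> * A * inner (- M Phat D) D"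
    unfolding c_def using sbdf2_dissipation_bound[OF M_lin M_sym M_coer alpha_pos S_bound
        less_imp_le[OF beta_pos] less_imp_le[OF tau_pos] A_pos D_scheme] .
  moreover have "(norm D)\<^sup>2 = 3 * (norm dtt)\<^sup>2 + 6 * (norm (P1 - P0))\<^sup>2 - 2 * (norm (P0 - Pm))\<^sup>2"
    unfolding D_def dtt_def by (rule norm_bdf2_increment_sq)
  ultimately have dissipation: "sqrt (2 * A) * c * (3 * (norm dtt)\<^sup>2 + 6 * (norm (P1 - P0))\<^sup>2
      - 2 * (norm (P0 - Pm))\<^sup>2) \<le> 2 * \<tau> * inner (- M Phat \<mu>) \<mu> + \<tau> * A * inner (- M Phat D) D"
    by simp
  note quadratic = bdf2_sqrt_op_norm_sq_identity[OF Lop_lin Lop_sym, of P1 P0 Pm, folded D_def dtt_def]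
  note gradient = bdf2_gradient_extrapolation_bound[OF fderiv lip, of P1 P0 Pm, folded D_def]
  show ?thesis
    unfolding Let_def E_BDF2_def c_def[symmetric] dtt_def[symmetric]
    using quadratic gradient pairing dissipation by (simp add: algebra_simps)
qed

end
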